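(* Let $G$ be a compact Lie group and $X=(X_t)_{t\ge0}$ a $G$-valued Lévy process. The following are equivalent: (1) $X$ has auto-invariant by conjugation increments; (2) for every $t\ge0$, $X_t$ is invariant (in law) by conjugation by every element of its own support; (3) $X$ is invariant by conjugation by $H_X$, i.e. for every $g\in H_X$ the process $(g^{-1}X_tg)_{t\ge0}$ has the same law as $(X_t)_{t\ge0}$.
   Context: A Lévy process on $G$ is a càdlàg process with $X_0=e$ (neutral element) and independent and stationary right increments: for $0\le t_0<\dots<t_n$ the variables $(X_{t_{i-1}}^{-1}X_{t_i})_{i=1}^n$ are independent, and $X_s^{-1}X_t$ has the law of $X_{t-s}$ for $s<t$. ${\sf Supp}(Y)$ is the support of the law of $Y$; $H_X$ is the closure of the subgroup generated by $\bigcup_{t\ge0}{\sf Supp}(X_t)$. A finite family $(Y_i)_{i\in T}$ ($\#T\ge2$) of $G$-valued random variables is auto-invariant by conjugation if for all distinct $i,j\in T$ and every $g\in{\sf Supp}(Y_j)$, $gY_ig^{-1}$ has the same law as $Y_i$. $X$ has auto-invariant by conjugation increments if for every $0=t_0\le t_1\le\dots\le t_k$ the sequence $(X_{t_{i-1}}^{-1}X_{t_i})_{i=1}^k$ is auto-invariant by conjugation. *)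

theory Defs
  imports "HOL-Probability.Probability"
begin

type_synonym 'n mat = "real^'n^'n"

text \<open>A compact Lie group is represented (up to isomorphism of Lie groups) as a compact
  subgroup of GL(n,R); every compact Lie group arises this way (Peter--Weyl) and
  every compact subgroup of GL(n,R) is a closed, hence Lie, subgroup.\<close>
definition compact_matrix_group :: "'n::finite mat set \<Rightarrow> bool" where
  "compact_matrix_group G \<longleftrightarrow> compact G \<and> G \<subseteq> {A. invertible A} \<and> mat 1 \<in> G \<and>
     (\<forall>a\<in>G. \<forall>b\<in>G. a ** b \<in> G) \<and> (\<forall>a\<in>G. matrix_inv a \<in> G)"

definition supp :: "'a measure \<Rightarrow> ('a \<Rightarrow> 'b::topological_space) \<Rightarrow> 'b set" where
  "supp M Y = {x. \<forall>U. open U \<longrightarrow> x \<in> U \<longrightarrow> emeasure M (Y -` U \<inter> space M) > 0}"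

definition gen_subgroup :: "'n::finite mat set \<Rightarrow> 'n mat set" where
  "gen_subgroup S = \<Inter>{H. H \<subseteq> {A. invertible A} \<and> S \<subseteq> H \<and> mat 1 \<in> H \<and>
      (\<forall>a\<in>H. \<forall>b\<in>H. a ** b \<in> H) \<and> (\<forall>a\<in>H. matrix_inv a \<in> H)}"

definition H_X :: "'a measure \<Rightarrow> (real \<Rightarrow> 'a \<Rightarrow> 'n::finite mat) \<Rightarrow> 'n mat set" where
  "H_X M X = closure (gen_subgroup (\<Union>t\<in>{0..}. supp M (X t)))"

definition levy_process ::
  "'a measure \<Rightarrow> 'n::finite mat set \<Rightarrow> (real \<Rightarrow> 'a \<Rightarrow> 'n mat) \<Rightarrow> bool" where
  "levy_process M G X \<longleftrightarrow>
     prob_space M \<and>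
     (\<forall>t\<ge>0. X t \<in> borel_measurable M) \<and>
     (\<forall>t\<ge>0. \<forall>\<omega>\<in>space M. X t \<omega> \<in> G) \<and>
     (\<forall>\<omega>\<in>space M. X 0 \<omega> = mat 1) \<and>
     (\<forall>\<omega>\<in>space M. \<forall>t\<ge>0. continuous (at_right t) (\<lambda>s. X s \<omega>) \<and>
          (t > 0 \<longrightarrow> (\<exists>L. ((\<lambda>s. X s \<omega>) \<longlongrightarrow> L) (at_left t)))) \<and>
     (\<forall>(n::nat) (t::nat \<Rightarrow> real). 0 \<le> t 0 \<and> (\<forall>i<n. t i < t (Suc i)) \<longrightarrow>
          prob_space.indep_vars M (\<lambda>_. borel)
            (\<lambda>i \<omega>. matrix_inv (X (t (i - 1)) \<omega>) ** X (t i) \<omega>) {1..n}) \<and>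
     (\<forall>s t. 0 \<le> s \<and> s < t \<longrightarrow>
          distr M borel (\<lambda>\<omega>. matrix_inv (X s \<omega>) ** X t \<omega>) = distr M borel (X (t - s)))"

definition auto_inv_conj :: "'a measure \<Rightarrow> 'i set \<Rightarrow> ('i \<Rightarrow> 'a \<Rightarrow> 'n::finite mat) \<Rightarrow> bool" where
  "auto_inv_conj M T Y \<longleftrightarrow> (\<forall>i\<in>T. \<forall>j\<in>T. i \<noteq> j \<longrightarrow> (\<forall>g\<in>supp M (Y j).
      distr M borel (\<lambda>\<omega>. g ** Y i \<omega> ** matrix_inv g) = distr M borel (Y i)))"

definition auto_inv_conj_increments :: "'a measure \<Rightarrow> (real \<Rightarrow> 'a \<Rightarrow> 'n::finite mat) \<Rightarrow> bool" where
  "auto_inv_conj_increments M X \<longleftrightarrow>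
     (\<forall>(k::nat) (t::nat \<Rightarrow> real). t 0 = 0 \<and> (\<forall>i<k. t i \<le> t (Suc i)) \<longrightarrow>
        auto_inv_conj M {1..k} (\<lambda>i \<omega>. matrix_inv (X (t (i - 1)) \<omega>) ** X (t i) \<omega>))"

definition process_law :: "'a measure \<Rightarrow> (real \<Rightarrow> 'a \<Rightarrow> 'n::finite mat) \<Rightarrow> (real \<Rightarrow> 'n mat) measure" where
  "process_law M X = distr M (PiM {0..} (\<lambda>_. borel)) (\<lambda>\<omega>. restrict (\<lambda>t. X t \<omega>) {0..})"

end

theory Submission
  imports Defs
begin

text \<open>X_s is invariant under conjugation by g iff g X_s and X_s g have the same law, and the
  elements of G with this property form a closed subgroup K_s of G (closed because equality in law
  passes to pointwise limits). Everything reduces to condition (C): X_s is invariant under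
  conjugation by every element of every support S_u. As the increment over [s, s + u] has the law
  of X_u and increments are independent, (C) is a reformulation of (1). Condition (3) gives (C)
  through the one-dimensional marginals; conversely (C) puts the generators of H_X, hence H_X, into
  every K_s, and conjugating the independent increments along a time grid by an element of K_s
  preserves their joint law, hence every finite-dimensional law of X. Finally (2) gives (C): for
  u = m d, X_u is a.s. a product of m increments with support S_d, which lies in K_d by (2), so
  S_u is contained in K_d; independence of increments carries invariance from time d to all its
  multiples, and right continuity of the paths extends it from the grids (u / (k + 1)) N to every
  time.\<close>

section \<open>Matrix groups\<close>

lemma matrix_inv_left: "invertible (A::'n::finite mat) \<Longrightarrow> matrix_inv A ** A = mat 1"
  unfolding invertible_def matrix_inv_def by (rule someI2_ex) auto

lemma matrix_inv_right: "invertible (A::'n::finite mat) \<Longrightarrow> A ** matrix_inv A = mat 1"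
  unfolding invertible_def matrix_inv_def by (rule someI2_ex) auto

lemma matrix_inv_unique: "(A::'n::finite mat) ** B = mat 1 \<Longrightarrow> matrix_inv A = B"
  by (metis matrix_inv_left invertible_right_inverse matrix_mul_assoc matrix_mul_lid matrix_mul_rid)

lemma matrix_inv_matrix_inv: "invertible (A::'n::finite mat) \<Longrightarrow> matrix_inv (matrix_inv A) = A"
  by (rule matrix_inv_unique) (rule matrix_inv_left)

lemma matrix_inv_mat_1: "matrix_inv (mat 1 :: 'n::finite mat) = mat 1"
  by (rule matrix_inv_unique) simp

lemma continuous_on_matrix_mult: "continuous_on UNIV (\<lambda>x::'n::finite mat \<times> 'n mat. fst x ** snd x)"
  unfolding matrix_matrix_mult_def by (intro continuous_intros continuous_on_vec_lambda)

lemma tendsto_matrix_mult: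
  fixes f g :: "'b \<Rightarrow> 'n::finite mat"
  assumes "(f \<longlongrightarrow> a) F" "(g \<longlongrightarrow> b) F"
  shows "((\<lambda>x. f x ** g x) \<longlongrightarrow> a ** b) F"
proof -
  have "isCont (\<lambda>x::'n mat \<times> 'n mat. fst x ** snd x) (a, b)"
    using continuous_on_matrix_mult continuous_on_eq_continuous_at open_UNIV by blast
  from isCont_tendsto_compose[OF this tendsto_Pair[OF assms]] show ?thesis by simp
qed

lemma borel_measurable_matrix_mult[measurable (raw)]:
  fixes f g :: "'a \<Rightarrow> 'n::finite mat"
  assumes "f \<in> borel_measurable M" "g \<in> borel_measurable M"
  shows "(\<lambda>x. f x ** g x) \<in> borel_measurable M"
  using assms by (rule borel_measurable_continuous_Pair) (rule continuous_on_matrix_mult)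

fun mat_prod_upto :: "(nat \<Rightarrow> 'n::finite mat) \<Rightarrow> nat \<Rightarrow> 'n mat" where
  "mat_prod_upto y 0 = mat 1"
| "mat_prod_upto y (Suc j) = mat_prod_upto y j ** y (Suc j)"

lemma mat_prod_upto_cong:
  "(\<And>i. 1 \<le> i \<Longrightarrow> i \<le> j \<Longrightarrow> y i = z i) \<Longrightarrow> mat_prod_upto y j = mat_prod_upto z j"
  by (induction j) auto

lemma mat_prod_upto_telescope:
  assumes "x 0 = mat 1" and "\<And>i. i < j \<Longrightarrow> invertible (x i)"
  shows "mat_prod_upto (\<lambda>i. matrix_inv (x (i - 1)) ** x i) j = x j"
  using assms(2)
proof (induction j)
  case (Suc j)
  then have "invertible (x j)" by simp
  with Suc show ?case by (simp add: matrix_mul_assoc matrix_inv_right)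
qed (simp add: assms(1))

lemma mat_prod_upto_conj:
  fixes a b :: "'n::finite mat"
  assumes "b ** a = mat 1"
  shows "mat_prod_upto (\<lambda>i. a ** y i ** b) j = a ** mat_prod_upto y j ** b"
proof (induction j)
  case 0
  then show ?case using assms matrix_left_right_inverse[of a b] by simp
next
  case (Suc j)
  have "b ** (a ** V) = V" for V :: "'n mat"
    using assms by (simp add: matrix_mul_assoc)
  then have "a ** Z ** b ** (a ** W ** b) = a ** (Z ** W) ** b" for Z W :: "'n mat"
    by (simp add: matrix_mul_assoc[symmetric])
  then show ?case using Suc by simp
qed

lemma measurable_mat_prod_upto:
  "j \<le> n \<Longrightarrow> (\<lambda>y. mat_prod_upto y j) \<in> borel_measurable (PiM {1..n} (\<lambda>_. borel :: 'n::finite mat measure))"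
proof (induction j)
  case (Suc j)
  then have "(\<lambda>y. y (Suc j)) \<in> borel_measurable (PiM {1..n} (\<lambda>_. borel :: 'n mat measure))"
    by (intro measurable_component_singleton) auto
  with Suc show ?case by simp
qed simp

lemma gen_subgroup_subset: "S \<subseteq> gen_subgroup S"
  unfolding gen_subgroup_def by blast

lemma gen_subgroup_matrix_inv: "g \<in> gen_subgroup S \<Longrightarrow> matrix_inv g \<in> gen_subgroup S"
  unfolding gen_subgroup_def by blast

section \<open>Supports and laws\<close>

lemma supp_eq_law_support:
  assumes "Y \<in> borel_measurable M"
  shows "supp M Y = {x. \<forall>U. open U \<longrightarrow> x \<in> U \<longrightarrow> emeasure (distr M borel Y) U > 0}"
  unfolding supp_def using assms by (simp add: emeasure_distr)

lemma supp_eq_if_distr_eq: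
  assumes "Y \<in> borel_measurable M" "Z \<in> borel_measurable M" "distr M borel Y = distr M borel Z"
  shows "supp M Y = supp M Z"
  using assms by (simp add: supp_eq_law_support)

lemma supp_subset_closed_AE:
  assumes "closed C" and "AE \<omega> in M. Y \<omega> \<in> C"
  shows "supp M Y \<subseteq> C"
proof
  fix x assume x: "x \<in> supp M Y"
  show "x \<in> C"
  proof (rule ccontr)
    assume "x \<notin> C"
    with x assms(1) have pos: "emeasure M (Y -` (- C) \<inter> space M) > 0"
      unfolding supp_def by (simp add: open_Compl)
    obtain N where N: "{\<omega> \<in> space M. Y \<omega> \<notin> C} \<subseteq> N" "N \<in> sets M" "emeasure M N = 0"
      using assms(2) by (rule AE_E)
    then have "emeasure M (Y -` (- C) \<inter> space M) \<le> emeasure M N"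
      by (intro emeasure_mono) auto
    with pos N(3) show False by simp
  qed
qed

lemma supp_const:
  fixes c :: "'b::t1_space"
  assumes "prob_space M" "\<And>\<omega>. \<omega> \<in> space M \<Longrightarrow> Y \<omega> = c"
  shows "supp M Y = {c}"
proof
  show "supp M Y \<subseteq> {c}" by (rule supp_subset_closed_AE) (use assms in auto)
  have "Y -` U \<inter> space M = space M" if "c \<in> U" for U
    using assms(2) that by auto
  then show "{c} \<subseteq> supp M Y"
    unfolding supp_def using prob_space.emeasure_space_1[OF assms(1)] by auto
qed

text \<open>The complement of the support is a union of null open sets, countably many of which
  suffice by Lindeloef's theorem.\<close>
lemma AE_in_supp:
  fixes Y :: "'a \<Rightarrow> 'b::second_countable_topology"
  assumes Y: "Y \<in> borel_measurable M"
  shows "AE \<omega> in M. Y \<omega> \<in> supp M Y"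
proof -
  let ?N = "distr M borel Y"
  define F where "F = {U. open U \<and> emeasure ?N U = 0}"
  have compl: "- supp M Y = \<Union>F"
    unfolding supp_eq_law_support[OF Y] F_def by (auto simp: not_less)
  obtain F' where F': "F' \<subseteq> F" "countable F'" "\<Union>F' = \<Union>F"
    using Lindelof[of F] unfolding F_def by auto
  have "(\<Union>U\<in>F'. U) \<in> null_sets ?N"
    using F'(1,2) by (intro null_sets_UN') (auto simp: F_def null_sets_def)
  then have "- supp M Y \<in> null_sets ?N" using F'(3) compl by simp
  then have "Y -` (- supp M Y) \<inter> space M \<in> null_sets M"
    using Y by (simp add: null_sets_distr_iff)
  then show ?thesis by (rule AE_I') auto
qed

lemma measure_eqI_continuous_integrals:
  fixes \<mu> \<nu> :: "'b::{metric_space, second_countable_topology} measure"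
  assumes s\<mu>: "sets \<mu> = sets borel" and s\<nu>: "sets \<nu> = sets borel"
    and "finite_measure \<mu>" "finite_measure \<nu>"
    and eq: "\<And>f::'b \<Rightarrow> real. continuous_on UNIV f \<Longrightarrow> (\<And>x. 0 \<le> f x) \<Longrightarrow> (\<And>x. f x \<le> 1) \<Longrightarrow>
               integral\<^sup>L \<mu> f = integral\<^sup>L \<nu> f"
  shows "\<mu> = \<nu>"
proof -
  interpret m: finite_measure \<mu> by fact
  interpret n: finite_measure \<nu> by fact
  have sp\<mu>: "space \<mu> = UNIV" using sets_eq_imp_space_eq[OF s\<mu>] by simp
  have sp\<nu>: "space \<nu> = UNIV" using sets_eq_imp_space_eq[OF s\<nu>] by simp
  have closed_eq: "emeasure \<mu> F = emeasure \<nu> F" if F: "closed F" for F :: "'b set"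
  proof (cases "F = {}")
    case False
    text \<open>Continuous functions decreasing pointwise to the indicator of F.\<close>
    define f where "f k x = max 0 (1 - real k * infdist x F)" for k :: nat and x
    have cont: "continuous_on UNIV (f k)" for k
      unfolding f_def by (intro continuous_intros)
    have meas: "f k \<in> borel_measurable \<mu>" "f k \<in> borel_measurable \<nu>" for k
      using borel_measurable_continuous_onI[OF cont] s\<mu> s\<nu> measurable_cong_sets by blast+
    have lim: "(\<lambda>k. f k x) \<longlonglongrightarrow> indicator F x" for x
    proof (cases "x \<in> F")
      case xF: False
      have d: "infdist x F > 0" using infdist_pos_not_in_closed[OF F False xF] .
      obtain N :: nat where N: "1 / infdist x F < real N" using reals_Archimedean2 by blast
      have "f k x = indicator F x" if "N \<le> k" for k
      proof -
        have "1 / infdist x F < real k" using N that by (meson less_le_trans of_nat_le_iff)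
        then have "1 < real k * infdist x F" using d by (simp add: field_simps)
        then show ?thesis using xF by (simp add: f_def)
      qed
      then show ?thesis by (intro tendsto_eventually eventually_sequentiallyI)
    qed (simp add: f_def)
    have bnd: "norm (f k x) \<le> 1" for k x
      unfolding f_def using infdist_nonneg[of x F] by auto
    have Fb: "F \<in> sets borel" using F by auto
    have "(\<lambda>k. integral\<^sup>L \<mu> (f k)) \<longlonglongrightarrow> integral\<^sup>L \<mu> (indicator F)"
      "(\<lambda>k. integral\<^sup>L \<nu> (f k)) \<longlonglongrightarrow> integral\<^sup>L \<nu> (indicator F)"
      by (rule integral_dominated_convergence[where w="\<lambda>_. 1"]; use meas lim bnd Fb s\<mu> s\<nu> in auto)+
    moreover have "integral\<^sup>L \<mu> (f k) = integral\<^sup>L \<nu> (f k)" for k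
      by (rule eq[OF cont]) (use bnd in \<open>auto simp: f_def\<close>)
    ultimately have "integral\<^sup>L \<mu> (indicator F) = integral\<^sup>L \<nu> (indicator F :: 'b \<Rightarrow> real)"
      using LIMSEQ_unique by fastforce
    then show ?thesis
      using Fb s\<mu> s\<nu> sp\<mu> sp\<nu> by (simp add: m.emeasure_eq_measure n.emeasure_eq_measure)
  qed simp
  have "sets borel = sigma_sets UNIV (Collect closed :: 'b set set)"
    by (subst borel_eq_closed) (simp add: sets_measure_of)
  then show ?thesis
    using s\<mu> s\<nu> closed_eq m.emeasure_real
    by (intro measure_eqI_generator_eq[where E="Collect closed" and \<Omega>=UNIV and A="\<lambda>_. UNIV"])
       (auto simp: Int_stable_def)
qed

lemma distr_eq_LIMSEQ:
  fixes A B :: "nat \<Rightarrow> 'a \<Rightarrow> 'b::{metric_space, second_countable_topology}"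
  assumes "prob_space M"
    and mA: "\<And>k. A k \<in> borel_measurable M" and mB: "\<And>k. B k \<in> borel_measurable M"
    and mA': "A' \<in> borel_measurable M" and mB': "B' \<in> borel_measurable M"
    and lA: "\<And>\<omega>. \<omega> \<in> space M \<Longrightarrow> (\<lambda>k. A k \<omega>) \<longlonglongrightarrow> A' \<omega>"
    and lB: "\<And>\<omega>. \<omega> \<in> space M \<Longrightarrow> (\<lambda>k. B k \<omega>) \<longlonglongrightarrow> B' \<omega>"
    and eq: "\<And>k. distr M borel (A k) = distr M borel (B k)"
  shows "distr M borel A' = distr M borel B'"
proof (rule measure_eqI_continuous_integrals)
  interpret prob_space M by fact
  show "finite_measure (distr M borel A')" "finite_measure (distr M borel B')"
    using prob_space_distr[OF mA'] prob_space_distr[OF mB'] by (simp_all add: prob_space_def)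
  fix f :: "'b \<Rightarrow> real" assume cf: "continuous_on UNIV f" and "\<And>x. 0 \<le> f x" "\<And>x. f x \<le> 1"
  then have bnd: "norm (f x) \<le> 1" for x by (simp add: abs_le_iff)
  have mf: "f \<in> borel_measurable borel" by (rule borel_measurable_continuous_onI[OF cf])
  have ic: "isCont f x" for x using cf by (simp add: continuous_on_eq_continuous_at)
  have lim_f: "(\<lambda>k. f (A k \<omega>)) \<longlonglongrightarrow> f (A' \<omega>)" "(\<lambda>k. f (B k \<omega>)) \<longlonglongrightarrow> f (B' \<omega>)"
    if "\<omega> \<in> space M" for \<omega>
    using isCont_tendsto_compose[OF ic lA[OF that]] isCont_tendsto_compose[OF ic lB[OF that]] .
  have "(\<lambda>k. integral\<^sup>L M (\<lambda>\<omega>. f (A k \<omega>))) \<longlonglongrightarrow> integral\<^sup>L M (\<lambda>\<omega>. f (A' \<omega>))"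
    "(\<lambda>k. integral\<^sup>L M (\<lambda>\<omega>. f (B k \<omega>))) \<longlonglongrightarrow> integral\<^sup>L M (\<lambda>\<omega>. f (B' \<omega>))"
    by (rule integral_dominated_convergence[where w="\<lambda>_. 1"]; use mA mB mA' mB' mf bnd lim_f in auto)+
  moreover have "integral\<^sup>L M (\<lambda>\<omega>. f (A k \<omega>)) = integral\<^sup>L M (\<lambda>\<omega>. f (B k \<omega>))" for k
    using eq[of k] integral_distr[OF mA[of k] mf] integral_distr[OF mB[of k] mf] by simp
  ultimately have "integral\<^sup>L M (\<lambda>\<omega>. f (A' \<omega>)) = integral\<^sup>L M (\<lambda>\<omega>. f (B' \<omega>))"
    using LIMSEQ_unique by fastforce
  then show "integral\<^sup>L (distr M borel A') f = integral\<^sup>L (distr M borel B') f"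
    using integral_distr[OF mA' mf] integral_distr[OF mB' mf] by simp
qed simp_all

lemma distr_comp_eq:
  assumes "Y \<in> measurable M N" "Z \<in> measurable M N" "\<phi> \<in> measurable N L"
    and "distr M N Y = distr M N Z"
  shows "distr M L (\<lambda>\<omega>. \<phi> (Y \<omega>)) = distr M L (\<lambda>\<omega>. \<phi> (Z \<omega>))"
  using distr_distr[OF assms(3,1)] distr_distr[OF assms(3,2)] assms(4) by (simp add: comp_def)

lemma distr_process_law_component:
  assumes "\<And>t. t \<ge> 0 \<Longrightarrow> Y t \<in> borel_measurable M" and "s \<ge> 0"
  shows "distr (process_law M Y) borel (\<lambda>f. f s) = distr M borel (Y s)"
proof -
  have "(\<lambda>\<omega>. restrict (\<lambda>t. Y t \<omega>) {0..}) \<in> measurable M (PiM {0..} (\<lambda>_. borel))"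
    by (rule measurable_restrict) (use assms in auto)
  from distr_distr[OF _ this, of "\<lambda>f. f s" borel] assms(2) show ?thesis
    unfolding process_law_def by (simp add: comp_def)
qed

lemma emeasure_process_law_cylinder:
  assumes "\<And>t. t \<ge> 0 \<Longrightarrow> Y t \<in> borel_measurable M" and J: "J \<subseteq> {0..}" "finite J"
    and A: "\<And>j. j \<in> J \<Longrightarrow> A j \<in> sets borel"
  shows "emeasure (process_law M Y) (prod_emb {0..} (\<lambda>_. borel) J (PiE J A))
       = emeasure M {\<omega>\<in>space M. \<forall>j\<in>J. Y j \<omega> \<in> A j}"
proof -
  have "(\<lambda>\<omega>. restrict (\<lambda>t. Y t \<omega>) {0..}) \<in> measurable M (PiM {0..} (\<lambda>_. borel))"
    by (rule measurable_restrict) (use assms in auto)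
  moreover have "prod_emb {0..} (\<lambda>_. borel) J (PiE J A) \<in> sets (PiM {0..} (\<lambda>_. borel))"
    by (rule sets_PiM_I) (use J A in auto)
  moreover have "(\<lambda>\<omega>. restrict (\<lambda>t. Y t \<omega>) {0..}) -` prod_emb {0..} (\<lambda>_. borel) J (PiE J A) \<inter> space M
      = {\<omega>\<in>space M. \<forall>j\<in>J. Y j \<omega> \<in> A j}"
    using J(1) by (auto simp: prod_emb_iff PiE_iff subset_iff)
  ultimately show ?thesis unfolding process_law_def by (simp add: emeasure_distr)
qed

section \<open>Time grids\<close>

lemma grid_nonneg:
  fixes t :: "nat \<Rightarrow> real"
  assumes "0 \<le> t 0" "\<And>i. i < n \<Longrightarrow> t i \<le> t (Suc i)" "j \<le> n"
  shows "0 \<le> t j"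
  using lift_Suc_mono_le_ivl[of "{..<n}" t 0 j] assms by fastforce

lemma strict_grid_step:
  fixes t :: "nat \<Rightarrow> real"
  assumes t0: "0 \<le> t 0" and mono: "\<And>i. i < n \<Longrightarrow> t i < t (Suc i)" and i: "i \<in> {1..n}"
  shows "0 \<le> t (i - 1)" "t (i - 1) < t i"
proof -
  show "0 \<le> t (i - 1)"
    using i grid_nonneg[of t n "i - 1", OF t0 less_imp_le[OF mono]] by force
  show "t (i - 1) < t i"
    using i mono[of "i - 1"] by force
qed

lemma finite_subset_strict_grid:
  fixes J :: "real set"
  assumes "finite J" "J \<subseteq> {0..}"
  obtains n and t :: "nat \<Rightarrow> real"
  where "t 0 = 0" "\<And>i. i < n \<Longrightarrow> t i < t (Suc i)" "J \<subseteq> t ` {..n}"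
proof -
  define L where "L = sorted_list_of_set (insert 0 J)"
  have setL: "set L = insert 0 J"
    unfolding L_def using assms(1) by (intro set_sorted_list_of_set) simp
  have sorted: "sorted_wrt (<) L" unfolding L_def by (rule strict_sorted_list_of_set)
  have "Min (insert 0 J) = 0" using assms by (intro Min_eqI) auto
  then have "L ! 0 = 0"
    unfolding L_def using sorted_list_of_set_nonempty[of "insert 0 J"] assms(1) by simp
  moreover have "L ! i < L ! Suc i" if "i < length L - 1" for i
    using sorted_wrt_nth_less[OF sorted, of i "Suc i"] that by simp
  moreover have "J \<subseteq> (\<lambda>i. L ! i) ` {..length L - 1}"
  proof
    fix j assume "j \<in> J"
    then have "j \<in> set L" using setL by simp
    then obtain i where "i < length L" "L ! i = j" by (auto simp: in_set_conv_nth)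
    then show "j \<in> (\<lambda>i. L ! i) ` {..length L - 1}" by force
  qed
  ultimately show ?thesis by (rule that)
qed

lemma grid_approx_at_right:
  fixes s u :: real
  assumes s: "0 \<le> s" and u: "0 < u"
  shows "\<exists>m::nat \<Rightarrow> nat. filterlim (\<lambda>k. real (m k) * (u / real (Suc k))) (at_right s) sequentially"
proof -
  define d where "d k = u / real (Suc k)" for k
  have d: "d k > 0" for k using u by (simp add: d_def)
  define q where "q k = real (nat \<lfloor>s / d k\<rfloor> + 1) * d k" for k
  have q: "s < q k \<and> q k \<le> s + d k" for k
  proof -
    have q_eq: "q k = (of_int \<lfloor>s / d k\<rfloor> + 1) * d k"
      using s d[of k] unfolding q_def by simp
    have "s / d k < of_int \<lfloor>s / d k\<rfloor> + 1" by linarith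
    then have "s < (of_int \<lfloor>s / d k\<rfloor> + 1) * d k"
      using d[of k] pos_divide_less_eq by blast
    moreover have "of_int \<lfloor>s / d k\<rfloor> * d k \<le> s"
      using d[of k] by (simp add: pos_le_divide_eq[symmetric])
    ultimately show ?thesis
      unfolding q_eq by (simp add: distrib_right)
  qed
  have "d \<longlonglongrightarrow> 0"
    unfolding d_def using LIMSEQ_Suc[OF lim_const_over_n[of u]] by simp
  from tendsto_add[OF tendsto_const[of s] this]
  have lim_hi: "(\<lambda>k. s + d k) \<longlonglongrightarrow> s" by simp
  have lo: "s \<le> q k" and hi: "q k \<le> s + d k" and gt: "q k \<in> {s<..}" for k
    using q[of k] by auto
  have "q \<longlonglongrightarrow> s"
    using tendsto_sandwich[OF always_eventually always_eventually tendsto_const lim_hi] lo hi by blast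
  then have "filterlim q (at_right s) sequentially"
    using gt by (intro tendsto_imp_filterlim_at_right always_eventually) auto
  then show ?thesis
    unfolding q_def d_def by (intro exI[of _ "\<lambda>k. nat \<lfloor>s / (u / real (Suc k))\<rfloor> + 1"])
qed

section \<open>Levy processes in a compact matrix group\<close>

locale compact_levy =
  fixes M :: "'a measure" and G :: "'n::finite mat set" and X :: "real \<Rightarrow> 'a \<Rightarrow> 'n mat"
  assumes compact_matrix_group: "compact_matrix_group G" and levy: "levy_process M G X"
begin

sublocale prob_space M
  using levy unfolding levy_process_def by blast

lemma measurable_X[measurable]: "t \<ge> 0 \<Longrightarrow> X t \<in> borel_measurable M"
  using levy unfolding levy_process_def by blast

lemma X_in_G: "t \<ge> 0 \<Longrightarrow> \<omega> \<in> space M \<Longrightarrow> X t \<omega> \<in> G"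
  using levy unfolding levy_process_def by blast

lemma X_0: "\<omega> \<in> space M \<Longrightarrow> X 0 \<omega> = mat 1"
  using levy unfolding levy_process_def by blast

lemma continuous_at_right_X: "\<omega> \<in> space M \<Longrightarrow> t \<ge> 0 \<Longrightarrow> continuous (at_right t) (\<lambda>s. X s \<omega>)"
  using levy unfolding levy_process_def by blast

lemma indep_increments:
  assumes "0 \<le> t 0" "\<And>i. i < n \<Longrightarrow> t i < t (Suc i)"
  shows "indep_vars (\<lambda>_. borel) (\<lambda>i \<omega>. matrix_inv (X (t (i - 1)) \<omega>) ** X (t i) \<omega>) {1..n}"
  using levy assms unfolding levy_process_def by blast

lemma stationary_increments:
  assumes "0 \<le> s" "s < t"
  shows "distr M borel (\<lambda>\<omega>. matrix_inv (X s \<omega>) ** X t \<omega>) = distr M borel (X (t - s))"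
  using levy assms unfolding levy_process_def by blast

lemma G_invertible: "g \<in> G \<Longrightarrow> invertible g"
  and mat_1_in_G: "mat 1 \<in> G"
  and G_mult: "a \<in> G \<Longrightarrow> b \<in> G \<Longrightarrow> a ** b \<in> G"
  and G_matrix_inv: "a \<in> G \<Longrightarrow> matrix_inv a \<in> G"
  and closed_G: "closed G"
  using compact_matrix_group compact_imp_closed unfolding compact_matrix_group_def by blast+

lemma invertible_X: "t \<ge> 0 \<Longrightarrow> \<omega> \<in> space M \<Longrightarrow> invertible (X t \<omega>)"
  using G_invertible X_in_G by blast

abbreviation S :: "real \<Rightarrow> 'n mat set" where
  "S t \<equiv> supp M (X t)"

lemma S_subset_G: "t \<ge> 0 \<Longrightarrow> S t \<subseteq> G"
  by (intro supp_subset_closed_AE closed_G AE_I2 X_in_G)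

lemma S_0: "S 0 = {mat 1}"
  by (rule supp_const[OF prob_space_axioms X_0])

definition incr :: "real \<Rightarrow> real \<Rightarrow> 'a \<Rightarrow> 'n mat" where
  "incr a b = (\<lambda>\<omega>. matrix_inv (X a \<omega>) ** X b \<omega>)"

lemma incr_self: "\<omega> \<in> space M \<Longrightarrow> 0 \<le> a \<Longrightarrow> incr a a \<omega> = mat 1"
  unfolding incr_def using invertible_X matrix_inv_left by blast

text \<open>matrix_inv is not continuous on singular matrices, so measurability of increments is
  taken from their independence.\<close>
lemma measurable_incr[measurable]:
  assumes "0 \<le> a" "a \<le> b"
  shows "incr a b \<in> borel_measurable M"
proof (cases "a = b")
  case True
  then show ?thesis using incr_self assms by (subst measurable_cong[where g="\<lambda>_. mat 1"]) auto
next
  case False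
  define t :: "nat \<Rightarrow> real" where "t i = (if i = 0 then a else b)" for i
  have "indep_vars (\<lambda>_. borel) (\<lambda>i \<omega>. matrix_inv (X (t (i - 1)) \<omega>) ** X (t i) \<omega>) {1..1}"
    by (rule indep_increments) (use assms False in \<open>auto simp: t_def\<close>)
  then show ?thesis unfolding indep_vars_def by (auto simp: t_def incr_def)
qed

lemma distr_incr:
  assumes "0 \<le> a" "a \<le> b"
  shows "distr M borel (incr a b) = distr M borel (X (b - a))"
proof (cases "a = b")
  case True
  then show ?thesis using incr_self X_0 assms by (intro distr_cong) auto
next
  case False
  then show ?thesis using stationary_increments[of a b] assms unfolding incr_def by auto
qed

lemma supp_incr: "0 \<le> a \<Longrightarrow> a \<le> b \<Longrightarrow> supp M (incr a b) = S (b - a)"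
  by (rule supp_eq_if_distr_eq) (auto simp: distr_incr)

lemma incr_telescope:
  assumes "t 0 = 0" "\<And>i. i < j \<Longrightarrow> 0 \<le> t i" "\<omega> \<in> space M"
  shows "mat_prod_upto (\<lambda>i. incr (t (i - 1)) (t i) \<omega>) j = X (t j) \<omega>"
  unfolding incr_def using assms X_0 invertible_X by (intro mat_prod_upto_telescope) auto

definition conj_invariant :: "real \<Rightarrow> 'n mat \<Rightarrow> bool" where
  "conj_invariant s g \<longleftrightarrow>
     distr M borel (\<lambda>\<omega>. g ** X s \<omega> ** matrix_inv g) = distr M borel (X s)"

definition commutes_in_law :: "real \<Rightarrow> 'n mat \<Rightarrow> bool" where
  "commutes_in_law s g \<longleftrightarrow> distr M borel (\<lambda>\<omega>. g ** X s \<omega>) = distr M borel (\<lambda>\<omega>. X s \<omega> ** g)"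

definition law_centralizer :: "real \<Rightarrow> 'n mat set" where
  "law_centralizer s = {g \<in> G. commutes_in_law s g}"

lemma conj_invariant_iff_commutes_in_law:
  assumes s: "s \<ge> 0" and g: "invertible g"
  shows "conj_invariant s g \<longleftrightarrow> commutes_in_law s g"
proof
  assume "conj_invariant s g"
  then have "distr M borel (\<lambda>\<omega>. (g ** X s \<omega> ** matrix_inv g) ** g) = distr M borel (\<lambda>\<omega>. X s \<omega> ** g)"
    unfolding conj_invariant_def using s by (intro distr_comp_eq[where \<phi>="\<lambda>A. A ** g"]) auto
  then show "commutes_in_law s g"
    unfolding commutes_in_law_def using g by (simp add: matrix_inv_left matrix_mul_assoc[symmetric])
next
  assume "commutes_in_law s g"
  then have "distr M borel (\<lambda>\<omega>. (g ** X s \<omega>) ** matrix_inv g) = distr M borel (\<lambda>\<omega>. (X s \<omega> ** g) ** matrix_inv g)"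
    unfolding commutes_in_law_def using s by (intro distr_comp_eq[where \<phi>="\<lambda>A. A ** matrix_inv g"]) auto
  then show "conj_invariant s g"
    unfolding conj_invariant_def using g by (simp add: matrix_inv_right matrix_mul_assoc[symmetric])
qed

lemma conj_invariant_iff_law_centralizer:
  "s \<ge> 0 \<Longrightarrow> g \<in> G \<Longrightarrow> conj_invariant s g \<longleftrightarrow> g \<in> law_centralizer s"
  unfolding law_centralizer_def using conj_invariant_iff_commutes_in_law G_invertible by blast

lemma mat_1_in_law_centralizer: "mat 1 \<in> law_centralizer s"
  unfolding law_centralizer_def commutes_in_law_def using mat_1_in_G by simp

lemma law_centralizer_mult:
  assumes s: "s \<ge> 0" and a: "a \<in> law_centralizer s" and b: "b \<in> law_centralizer s"
  shows "a ** b \<in> law_centralizer s"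
proof -
  have "distr M borel (\<lambda>\<omega>. a ** (b ** X s \<omega>)) = distr M borel (\<lambda>\<omega>. a ** (X s \<omega> ** b))"
    using b s unfolding law_centralizer_def commutes_in_law_def
    by (intro distr_comp_eq[where \<phi>="\<lambda>A. a ** A"]) auto
  moreover have "distr M borel (\<lambda>\<omega>. (a ** X s \<omega>) ** b) = distr M borel (\<lambda>\<omega>. (X s \<omega> ** a) ** b)"
    using a s unfolding law_centralizer_def commutes_in_law_def
    by (intro distr_comp_eq[where \<phi>="\<lambda>A. A ** b"]) auto
  ultimately show ?thesis
    using a b G_mult unfolding law_centralizer_def commutes_in_law_def by (simp add: matrix_mul_assoc)
qed

lemma law_centralizer_matrix_inv:
  assumes s: "s \<ge> 0" and a: "a \<in> law_centralizer s"
  shows "matrix_inv a \<in> law_centralizer s"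
proof -
  let ?b = "matrix_inv a"
  have ia: "invertible a" using a G_invertible unfolding law_centralizer_def by auto
  have "distr M borel (\<lambda>\<omega>. ?b ** (a ** X s \<omega>) ** ?b) = distr M borel (\<lambda>\<omega>. ?b ** (X s \<omega> ** a) ** ?b)"
    using a s unfolding law_centralizer_def commutes_in_law_def
    by (intro distr_comp_eq[where \<phi>="\<lambda>A. ?b ** A ** ?b"]) auto
  moreover have "?b ** (a ** A) ** ?b = A ** ?b" for A
    using ia by (simp add: matrix_mul_assoc matrix_inv_left)
  moreover have "?b ** (A ** a) ** ?b = ?b ** A" for A
    using ia by (simp add: matrix_mul_assoc[symmetric] matrix_inv_right)
  ultimately show ?thesis
    using a G_matrix_inv unfolding law_centralizer_def commutes_in_law_def by simp
qed

lemma closed_law_centralizer: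
  assumes s: "s \<ge> 0"
  shows "closed (law_centralizer s)"
  unfolding closed_sequential_limits
proof (intro allI impI, elim conjE)
  fix g :: "nat \<Rightarrow> 'n mat" and l
  assume gK: "\<forall>k. g k \<in> law_centralizer s" and lim: "g \<longlonglongrightarrow> l"
  have "l \<in> G" using closed_G gK lim unfolding law_centralizer_def closed_sequential_limits by blast
  moreover have "commutes_in_law s l"
    unfolding commutes_in_law_def
  proof (rule distr_eq_LIMSEQ[where A="\<lambda>k \<omega>. g k ** X s \<omega>" and B="\<lambda>k \<omega>. X s \<omega> ** g k"])
    show "distr M borel (\<lambda>\<omega>. g k ** X s \<omega>) = distr M borel (\<lambda>\<omega>. X s \<omega> ** g k)" for k
      using gK unfolding law_centralizer_def commutes_in_law_def by auto
  qed (use s lim in \<open>auto intro: prob_space_axioms tendsto_matrix_mult\<close>)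
  ultimately show "l \<in> law_centralizer s" unfolding law_centralizer_def by simp
qed

lemma H_X_subset_law_centralizer:
  assumes s: "s \<ge> 0" and S: "\<And>t. t \<ge> 0 \<Longrightarrow> S t \<subseteq> law_centralizer s"
  shows "H_X M X \<subseteq> law_centralizer s"
proof -
  have "gen_subgroup (\<Union>t\<in>{0..}. S t) \<subseteq> law_centralizer s"
    unfolding gen_subgroup_def using S G_invertible mat_1_in_law_centralizer
      law_centralizer_mult[OF s] law_centralizer_matrix_inv[OF s]
    by (intro Inter_lower) (auto simp: law_centralizer_def)
  then show ?thesis
    unfolding H_X_def using closed_law_centralizer[OF s] by (rule closure_minimal)
qed

lemma H_X_subset_G: "H_X M X \<subseteq> G"
proof -
  have "gen_subgroup (\<Union>t\<in>{0..}. S t) \<subseteq> G"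
    unfolding gen_subgroup_def using S_subset_G G_invertible mat_1_in_G G_mult G_matrix_inv
    by (intro Inter_lower) auto
  then show ?thesis unfolding H_X_def using closed_G by (rule closure_minimal)
qed

section \<open>Conjugating the increments\<close>

lemma distr_increments_conj:
  fixes a b :: "'n mat" and t :: "nat \<Rightarrow> real"
  assumes t0: "0 \<le> t 0" and mono: "\<And>i. i < n \<Longrightarrow> t i < t (Suc i)"
    and inv: "\<And>i. 1 \<le> i \<Longrightarrow> i \<le> n \<Longrightarrow>
       distr M borel (\<lambda>\<omega>. a ** X (t i - t (i - 1)) \<omega> ** b) = distr M borel (X (t i - t (i - 1)))"
  shows "distr M (PiM {1..n} (\<lambda>_. borel)) (\<lambda>\<omega>. \<lambda>i\<in>{1..n}. a ** incr (t (i - 1)) (t i) \<omega> ** b)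
       = distr M (PiM {1..n} (\<lambda>_. borel)) (\<lambda>\<omega>. \<lambda>i\<in>{1..n}. incr (t (i - 1)) (t i) \<omega>)"
proof (cases "n = 0")
  case True
  then show ?thesis by (intro distr_cong) auto
next
  case False
  define Y where "Y i = incr (t (i - 1)) (t i)" for i
  have le: "0 \<le> t (i - 1)" "t (i - 1) \<le> t i" if "i \<in> {1..n}" for i
    using strict_grid_step[OF t0 mono that] by auto
  have mY: "Y i \<in> borel_measurable M" "(\<lambda>\<omega>. a ** Y i \<omega> ** b) \<in> borel_measurable M"
    if "i \<in> {1..n}" for i
    using le[OF that] unfolding Y_def
    by (auto intro!: measurable_incr borel_measurable_matrix_mult)
  have indep: "indep_vars (\<lambda>_. borel) Y {1..n}"
    unfolding Y_def incr_def by (rule indep_increments[OF t0 mono])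
  have indep_conj: "indep_vars (\<lambda>_. borel) (\<lambda>i \<omega>. a ** Y i \<omega> ** b) {1..n}"
    using indep_vars_compose2[OF indep, where Y="\<lambda>_ A. a ** A ** b"] by simp
  have marginal: "distr M borel (\<lambda>\<omega>. a ** Y i \<omega> ** b) = distr M borel (Y i)" if "i \<in> {1..n}" for i
  proof -
    have "distr M borel (\<lambda>\<omega>. a ** Y i \<omega> ** b) = distr M borel (\<lambda>\<omega>. a ** X (t i - t (i - 1)) \<omega> ** b)"
      unfolding Y_def using le[OF that] by (intro distr_comp_eq[OF _ _ _ distr_incr]) auto
    also have "\<dots> = distr M borel (Y i)"
      unfolding Y_def using inv that distr_incr[OF le[OF that]] by auto
    finally show ?thesis .
  qed
  have "distr M (PiM {1..n} (\<lambda>_. borel)) (\<lambda>\<omega>. \<lambda>i\<in>{1..n}. a ** Y i \<omega> ** b)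
      = PiM {1..n} (\<lambda>i. distr M borel (\<lambda>\<omega>. a ** Y i \<omega> ** b))"
    using indep_vars_iff_distr_eq_PiM'[of "{1..n}" "\<lambda>i \<omega>. a ** Y i \<omega> ** b"] False mY indep_conj
    by simp
  also have "\<dots> = PiM {1..n} (\<lambda>i. distr M borel (Y i))"
    using marginal by (rule PiM_cong[OF refl])
  also have "\<dots> = distr M (PiM {1..n} (\<lambda>_. borel)) (\<lambda>\<omega>. \<lambda>i\<in>{1..n}. Y i \<omega>)"
    using indep_vars_iff_distr_eq_PiM'[of "{1..n}" Y] False mY indep by simp
  finally show ?thesis unfolding Y_def .
qed

text \<open>The finite-dimensional laws are images of the joint law of the increments under
  partial products, and conjugation commutes with taking partial products.\<close>
lemma finite_dim_law_conj_eq: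
  fixes a b :: "'n mat" and t :: "nat \<Rightarrow> real"
  assumes ba: "b ** a = mat 1" and t0: "t 0 = 0" and mono: "\<And>i. i < n \<Longrightarrow> t i < t (Suc i)"
    and inv: "\<And>i. 1 \<le> i \<Longrightarrow> i \<le> n \<Longrightarrow>
       distr M borel (\<lambda>\<omega>. a ** X (t i - t (i - 1)) \<omega> ** b) = distr M borel (X (t i - t (i - 1)))"
  shows "distr M (PiM {..n} (\<lambda>_. borel)) (\<lambda>\<omega>. \<lambda>j\<in>{..n}. a ** X (t j) \<omega> ** b)
       = distr M (PiM {..n} (\<lambda>_. borel)) (\<lambda>\<omega>. \<lambda>j\<in>{..n}. X (t j) \<omega>)"
proof -
  define Y where "Y i = incr (t (i - 1)) (t i)" for i
  define \<Phi> where "\<Phi> y = (\<lambda>j\<in>{..n}. mat_prod_upto y j)" for y :: "nat \<Rightarrow> 'n mat"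
  have tpos: "0 \<le> t i" if "i \<le> n" for i
    using grid_nonneg[of t n i, OF _ less_imp_le[OF mono]] t0 that by simp
  have mY: "Y i \<in> borel_measurable M" if "i \<in> {1..n}" for i
    using strict_grid_step[of t n i] t0 mono that unfolding Y_def by (intro measurable_incr) auto
  have prod: "\<Phi> (\<lambda>i\<in>{1..n}. c ** Y i \<omega> ** e) = (\<lambda>j\<in>{..n}. c ** X (t j) \<omega> ** e)"
    if "e ** c = mat 1" "\<omega> \<in> space M" for c e \<omega>
  proof -
    have "mat_prod_upto (\<lambda>i\<in>{1..n}. c ** Y i \<omega> ** e) j = c ** X (t j) \<omega> ** e" if "j \<le> n" for j
    proof -
      have "mat_prod_upto (\<lambda>i\<in>{1..n}. c ** Y i \<omega> ** e) j = mat_prod_upto (\<lambda>i. c ** Y i \<omega> ** e) j"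
        using that by (intro mat_prod_upto_cong) auto
      also have "\<dots> = c ** mat_prod_upto (\<lambda>i. Y i \<omega>) j ** e"
        by (rule mat_prod_upto_conj[OF \<open>e ** c = mat 1\<close>])
      also have "mat_prod_upto (\<lambda>i. Y i \<omega>) j = X (t j) \<omega>"
        unfolding Y_def using that t0 tpos \<open>\<omega> \<in> space M\<close> by (intro incr_telescope) auto
      finally show ?thesis .
    qed
    then show ?thesis unfolding \<Phi>_def by auto
  qed
  have "distr M (PiM {..n} (\<lambda>_. borel)) (\<lambda>\<omega>. \<lambda>j\<in>{..n}. a ** X (t j) \<omega> ** b)
      = distr M (PiM {..n} (\<lambda>_. borel)) (\<lambda>\<omega>. \<Phi> (\<lambda>i\<in>{1..n}. a ** Y i \<omega> ** b))"
    using prod[OF ba] by (intro distr_cong) auto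
  also have "\<dots> = distr M (PiM {..n} (\<lambda>_. borel)) (\<lambda>\<omega>. \<Phi> (\<lambda>i\<in>{1..n}. Y i \<omega>))"
  proof (rule distr_comp_eq[where \<phi>=\<Phi> and N="PiM {1..n} (\<lambda>_. borel)"])
    show "\<Phi> \<in> PiM {1..n} (\<lambda>_. borel) \<rightarrow>\<^sub>M PiM {..n} (\<lambda>_. borel)"
      unfolding \<Phi>_def by (intro measurable_restrict measurable_mat_prod_upto) auto
    show "distr M (PiM {1..n} (\<lambda>_. borel)) (\<lambda>\<omega>. \<lambda>i\<in>{1..n}. a ** Y i \<omega> ** b)
        = distr M (PiM {1..n} (\<lambda>_. borel)) (\<lambda>\<omega>. \<lambda>i\<in>{1..n}. Y i \<omega>)"
      unfolding Y_def by (rule distr_increments_conj[OF _ mono inv]) (simp_all add: t0)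
  qed (auto intro!: measurable_restrict borel_measurable_matrix_mult mY)
  also have "\<dots> = distr M (PiM {..n} (\<lambda>_. borel)) (\<lambda>\<omega>. \<lambda>j\<in>{..n}. X (t j) \<omega>)"
    using prod[of "mat 1" "mat 1"] by (intro distr_cong) auto
  finally show ?thesis .
qed

lemma conj_invariant_0: "g \<in> G \<Longrightarrow> conj_invariant 0 g"
  unfolding conj_invariant_def using X_0 G_invertible matrix_inv_right
  by (intro distr_cong) auto

lemma conj_invariant_mult_time:
  assumes d: "d \<ge> 0" and g: "g \<in> G" and inv: "conj_invariant d g"
  shows "conj_invariant (real m * d) g"
proof (cases "d = 0 \<or> m = 0")
  case True
  then show ?thesis using conj_invariant_0[OF g] by auto
next
  case False
  define t where "t i = real i * d" for i
  have mX: "X (t j) \<in> borel_measurable M" for j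
    unfolding t_def using d by (intro measurable_X) simp
  have F: "distr M (PiM {..m} (\<lambda>_. borel)) (\<lambda>\<omega>. \<lambda>j\<in>{..m}. g ** X (t j) \<omega> ** matrix_inv g)
      = distr M (PiM {..m} (\<lambda>_. borel)) (\<lambda>\<omega>. \<lambda>j\<in>{..m}. X (t j) \<omega>)"
  proof (rule finite_dim_law_conj_eq)
    show "matrix_inv g ** g = mat 1" using G_invertible[OF g] by (rule matrix_inv_left)
    show "t i < t (Suc i)" for i using False d by (simp add: t_def algebra_simps)
    have "t i - t (i - 1) = d" if "1 \<le> i" for i
      using that by (simp add: t_def of_nat_diff algebra_simps)
    then show "distr M borel (\<lambda>\<omega>. g ** X (t i - t (i - 1)) \<omega> ** matrix_inv g)
        = distr M borel (X (t i - t (i - 1)))" if "1 \<le> i" for i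
      using inv that unfolding conj_invariant_def by simp
  qed (simp add: t_def)
  have "(\<lambda>\<omega>. \<lambda>j\<in>{..m}. g ** X (t j) \<omega> ** matrix_inv g) \<in> M \<rightarrow>\<^sub>M PiM {..m} (\<lambda>_. borel)"
    "(\<lambda>\<omega>. \<lambda>j\<in>{..m}. X (t j) \<omega>) \<in> M \<rightarrow>\<^sub>M PiM {..m} (\<lambda>_. borel)"
    by (intro measurable_restrict borel_measurable_matrix_mult borel_measurable_const mX)+
  from distr_comp_eq[OF this measurable_component_singleton F]
  have "distr M borel (\<lambda>\<omega>. (\<lambda>j\<in>{..m}. g ** X (t j) \<omega> ** matrix_inv g) m)
      = distr M borel (\<lambda>\<omega>. (\<lambda>j\<in>{..m}. X (t j) \<omega>) m)"
    by simp
  then show ?thesis unfolding conj_invariant_def t_def by simp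
qed

text \<open>A.s. X(m d) is the product of m increments with support S d; if S d lies in the closed
  subgroup law_centralizer d, so does the support of X(m d).\<close>
lemma supp_mult_time_subset_law_centralizer:
  assumes d: "d \<ge> 0" and inv: "\<And>h. h \<in> S d \<Longrightarrow> conj_invariant d h"
  shows "S (real m * d) \<subseteq> law_centralizer d"
proof (rule supp_subset_closed_AE[OF closed_law_centralizer[OF d]])
  define t where "t i = real i * d" for i
  define Y where "Y i = incr (t (i - 1)) (t i)" for i
  have S_d: "S d \<subseteq> law_centralizer d"
    using S_subset_G[OF d] inv conj_invariant_iff_law_centralizer[OF d] by blast
  have le: "0 \<le> t (i - 1)" "t (i - 1) \<le> t i" for i
    using d by (auto simp: t_def intro!: mult_right_mono)
  have "AE \<omega> in M. Y i \<omega> \<in> law_centralizer d" if "1 \<le> i" for i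
  proof -
    have mY: "Y i \<in> borel_measurable M"
      unfolding Y_def using le by (rule measurable_incr)
    have "supp M (Y i) = S d"
      unfolding Y_def supp_incr[OF le] using that by (simp add: t_def of_nat_diff algebra_simps)
    then show ?thesis
      using S_d by (intro eventually_mono[OF AE_in_supp[OF mY]]) auto
  qed
  then have "AE \<omega> in M. \<forall>i\<in>{1..m}. Y i \<omega> \<in> law_centralizer d"
    by (intro AE_finite_allI) auto
  then show "AE \<omega> in M. X (real m * d) \<omega> \<in> law_centralizer d"
  proof (rule AE_mp, intro AE_I2 impI)
    fix \<omega> assume \<omega>: "\<omega> \<in> space M" and Y: "\<forall>i\<in>{1..m}. Y i \<omega> \<in> law_centralizer d"
    have "mat_prod_upto (\<lambda>i. Y i \<omega>) j \<in> law_centralizer d" if "j \<le> m" for j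
      using that by (induction j) (auto simp: Y mat_1_in_law_centralizer law_centralizer_mult[OF d])
    moreover have "mat_prod_upto (\<lambda>i. Y i \<omega>) m = X (real m * d) \<omega>"
      unfolding Y_def using incr_telescope[of t m \<omega>] \<omega> d by (simp add: t_def)
    ultimately show "X (real m * d) \<omega> \<in> law_centralizer d" by (metis order_refl)
  qed
qed

lemma conj_invariant_at_right_limit:
  assumes s: "s \<ge> 0" and q: "filterlim q (at_right s) sequentially" and q_nonneg: "\<And>k. 0 \<le> q k"
    and inv: "\<And>k. conj_invariant (q k) g"
  shows "conj_invariant s g"
  unfolding conj_invariant_def
proof (rule distr_eq_LIMSEQ[where A="\<lambda>k \<omega>. g ** X (q k) \<omega> ** matrix_inv g" and B="\<lambda>k. X (q k)"])
  show lim: "(\<lambda>k. X (q k) \<omega>) \<longlonglongrightarrow> X s \<omega>" if "\<omega> \<in> space M" for \<omega>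
    using filterlim_compose[OF continuous_at_right_X[OF that s, unfolded continuous_within] q] .
  show "(\<lambda>k. g ** X (q k) \<omega> ** matrix_inv g) \<longlonglongrightarrow> g ** X s \<omega> ** matrix_inv g" if "\<omega> \<in> space M" for \<omega>
    by (intro tendsto_matrix_mult tendsto_const lim[OF that])
  show "distr M borel (\<lambda>\<omega>. g ** X (q k) \<omega> ** matrix_inv g) = distr M borel (X (q k))" for k
    using inv unfolding conj_invariant_def by simp
  show "(\<lambda>\<omega>. g ** X (q k) \<omega> ** matrix_inv g) \<in> borel_measurable M" "X (q k) \<in> borel_measurable M" for k
    by (intro borel_measurable_matrix_mult borel_measurable_const measurable_X q_nonneg)+
  show "(\<lambda>\<omega>. g ** X s \<omega> ** matrix_inv g) \<in> borel_measurable M" "X s \<in> borel_measurable M"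
    by (intro borel_measurable_matrix_mult borel_measurable_const measurable_X s)+
qed (rule prob_space_axioms)

text \<open>Invariance at the grid times m u / (k + 1) follows from g \<in> S u; right continuity
  extends it to every time.\<close>
lemma conj_invariant_of_self_conj_invariant:
  assumes self: "\<And>t g. t \<ge> 0 \<Longrightarrow> g \<in> S t \<Longrightarrow> conj_invariant t g"
    and s: "s \<ge> 0" and u: "u \<ge> 0" and g: "g \<in> S u"
  shows "conj_invariant s g"
proof (cases "u = 0")
  case True
  then show ?thesis using g S_0 by (simp add: conj_invariant_def matrix_inv_mat_1)
next
  case False
  with u have u: "u > 0" by simp
  have gG: "g \<in> G" using g S_subset_G[OF less_imp_le[OF u]] by blast
  have grid: "conj_invariant (real m * (u / real (Suc k))) g" for m k
  proof -
    let ?d = "u / real (Suc k)"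
    have d: "?d \<ge> 0" using u by simp
    have "g \<in> S (real (Suc k) * ?d)" using g by simp
    then have "g \<in> law_centralizer ?d"
      using supp_mult_time_subset_law_centralizer[OF d self[OF d]] by blast
    then have "conj_invariant ?d g" using conj_invariant_iff_law_centralizer[OF d gG] by blast
    then show ?thesis by (rule conj_invariant_mult_time[OF d gG])
  qed
  obtain m where "filterlim (\<lambda>k. real (m k) * (u / real (Suc k))) (at_right s) sequentially"
    using grid_approx_at_right[OF s u] by blast
  then show ?thesis using grid u by (intro conj_invariant_at_right_limit[OF s]) auto
qed

section \<open>The law of the conjugated process\<close>

lemma emeasure_conj_cylinder_eq:
  assumes ba: "b ** a = mat 1"
    and inv: "\<And>s. s \<ge> 0 \<Longrightarrow> distr M borel (\<lambda>\<omega>. a ** X s \<omega> ** b) = distr M borel (X s)"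
    and J: "finite J" "J \<subseteq> {0..}" and A: "\<And>j. j \<in> J \<Longrightarrow> A j \<in> sets borel"
  shows "emeasure M {\<omega>\<in>space M. \<forall>j\<in>J. a ** X j \<omega> ** b \<in> A j}
       = emeasure M {\<omega>\<in>space M. \<forall>j\<in>J. X j \<omega> \<in> A j}"
proof -
  obtain n and t :: "nat \<Rightarrow> real"
    where t0: "t 0 = 0" and mono: "\<And>i. i < n \<Longrightarrow> t i < t (Suc i)" and J_grid: "J \<subseteq> t ` {..n}"
    by (rule finite_subset_strict_grid[OF J]) blast
  have tpos: "0 \<le> t i" if "i \<le> n" for i
    using grid_nonneg[of t n i, OF _ less_imp_le[OF mono]] t0 that by simp
  have F: "distr M (PiM {..n} (\<lambda>_. borel)) (\<lambda>\<omega>. \<lambda>j\<in>{..n}. a ** X (t j) \<omega> ** b)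
       = distr M (PiM {..n} (\<lambda>_. borel)) (\<lambda>\<omega>. \<lambda>j\<in>{..n}. X (t j) \<omega>)"
  proof (rule finite_dim_law_conj_eq[OF ba t0 mono])
    fix i assume "1 \<le> i" "i \<le> n"
    with t0 mono have "t (i - 1) < t i" by (intro strict_grid_step(2)) auto
    then show "distr M borel (\<lambda>\<omega>. a ** X (t i - t (i - 1)) \<omega> ** b) = distr M borel (X (t i - t (i - 1)))"
      by (intro inv) simp
  qed
  define B where "B = PiE {..n} (\<lambda>i. if t i \<in> J then A (t i) else UNIV)"
  have B: "B \<in> sets (PiM {..n} (\<lambda>_. borel))"
    unfolding B_def by (rule sets_PiM_I_finite) (use A in auto)
  have preimage_B: "(\<lambda>\<omega>. \<lambda>j\<in>{..n}. Z (t j) \<omega>) -` B \<inter> space M = {\<omega>\<in>space M. \<forall>j\<in>J. Z j \<omega> \<in> A j}"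
    for Z :: "real \<Rightarrow> 'a \<Rightarrow> 'n mat"
    using J_grid unfolding B_def by (auto simp: PiE_iff split: if_splits)
  have meas: "(\<lambda>\<omega>. \<lambda>j\<in>{..n}. c ** X (t j) \<omega> ** e) \<in> M \<rightarrow>\<^sub>M PiM {..n} (\<lambda>_. borel)"
    for c e :: "'n mat"
  proof (rule measurable_restrict)
    fix j assume "j \<in> {..n}"
    then have "X (t j) \<in> borel_measurable M" using tpos by (intro measurable_X) simp
    then show "(\<lambda>\<omega>. c ** X (t j) \<omega> ** e) \<in> borel_measurable M" by measurable
  qed
  have "emeasure M {\<omega>\<in>space M. \<forall>j\<in>J. a ** X j \<omega> ** b \<in> A j}
      = emeasure (distr M (PiM {..n} (\<lambda>_. borel)) (\<lambda>\<omega>. \<lambda>j\<in>{..n}. a ** X (t j) \<omega> ** b)) B"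
    using emeasure_distr[OF meas B] preimage_B[of "\<lambda>s \<omega>. a ** X s \<omega> ** b"] by simp
  also have "\<dots> = emeasure (distr M (PiM {..n} (\<lambda>_. borel)) (\<lambda>\<omega>. \<lambda>j\<in>{..n}. X (t j) \<omega>)) B"
    using F by simp
  also have "\<dots> = emeasure M {\<omega>\<in>space M. \<forall>j\<in>J. X j \<omega> \<in> A j}"
    using emeasure_distr[OF meas[of "mat 1" "mat 1"] B] preimage_B[of X] by simp
  finally show ?thesis .
qed

lemma process_law_conj_eq:
  assumes ba: "b ** a = mat 1"
    and inv: "\<And>s. s \<ge> 0 \<Longrightarrow> distr M borel (\<lambda>\<omega>. a ** X s \<omega> ** b) = distr M borel (X s)"
  shows "process_law M (\<lambda>t \<omega>. a ** X t \<omega> ** b) = process_law M X"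
proof (rule measure_eqI_PiM_infinite)
  have mA: "(\<lambda>\<omega>. a ** X t \<omega> ** b) \<in> borel_measurable M" if "t \<ge> 0" for t
    using that by measurable
  show "sets (process_law M (\<lambda>t \<omega>. a ** X t \<omega> ** b)) = sets (PiM {0..} (\<lambda>_. borel))"
    "sets (process_law M X) = sets (PiM {0..} (\<lambda>_. borel))"
    unfolding process_law_def by simp_all
  have "(\<lambda>\<omega>. restrict (\<lambda>t. a ** X t \<omega> ** b) {0..}) \<in> M \<rightarrow>\<^sub>M PiM {0..} (\<lambda>_. borel)"
    by (rule measurable_restrict) (use mA in auto)
  from prob_space_distr[OF this]
  show "finite_measure (process_law M (\<lambda>t \<omega>. a ** X t \<omega> ** b))"
    unfolding process_law_def by (simp add: prob_space_def)
  fix A :: "real \<Rightarrow> 'n mat set" and J :: "real set"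
  assume J: "finite J" "J \<subseteq> {0..}" and A: "\<And>i. i \<in> J \<Longrightarrow> A i \<in> sets borel"
  show "emeasure (process_law M (\<lambda>t \<omega>. a ** X t \<omega> ** b)) (prod_emb {0..} (\<lambda>_. borel) J (PiE J A))
      = emeasure (process_law M X) (prod_emb {0..} (\<lambda>_. borel) J (PiE J A))"
    using emeasure_process_law_cylinder[of "\<lambda>t \<omega>. a ** X t \<omega> ** b", OF mA J(2,1) A]
      emeasure_process_law_cylinder[of X, OF measurable_X J(2,1) A]
      emeasure_conj_cylinder_eq[OF ba inv J A] by simp
qed

lemma conj_invariant_of_auto_inv_conj_increments:
  assumes aic: "auto_inv_conj_increments M X" and s: "s \<ge> 0" and u: "u \<ge> 0" and g: "g \<in> S u"
  shows "conj_invariant s g"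
proof -
  define t :: "nat \<Rightarrow> real" where "t i = (if i = 0 then 0 else if i = 1 then s else s + u)" for i
  have aic2: "auto_inv_conj M {1..2} (\<lambda>i. incr (t (i - 1)) (t i))"
    using aic s u unfolding auto_inv_conj_increments_def incr_def
    by (elim allE[of _ 2] allE[of _ t]) (auto simp: t_def less_Suc_eq)
  have "g \<in> supp M (incr s (s + u))"
    using g supp_incr[of s "s + u"] s u by simp
  with aic2[unfolded auto_inv_conj_def, rule_format, of 1 2 g]
  have "distr M borel (\<lambda>\<omega>. g ** incr 0 s \<omega> ** matrix_inv g) = distr M borel (incr 0 s)"
    by (simp add: t_def)
  moreover have "incr 0 s \<omega> = X s \<omega>" if "\<omega> \<in> space M" for \<omega>
    using that by (simp add: incr_def X_0 matrix_inv_mat_1)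
  ultimately show ?thesis
    unfolding conj_invariant_def by (metis (no_types, lifting) distr_cong)
qed

lemma auto_inv_conj_increments_of_conj_invariant:
  assumes inv: "\<And>s u g. s \<ge> 0 \<Longrightarrow> u \<ge> 0 \<Longrightarrow> g \<in> S u \<Longrightarrow> conj_invariant s g"
  shows "auto_inv_conj_increments M X"
  unfolding auto_inv_conj_increments_def auto_inv_conj_def
proof (intro allI impI ballI, elim conjE)
  fix k :: nat and t :: "nat \<Rightarrow> real" and i j g
  assume t0: "t 0 = 0" and mono: "\<forall>i<k. t i \<le> t (Suc i)" and i: "i \<in> {1..k}" and j: "j \<in> {1..k}"
    and g: "g \<in> supp M (\<lambda>\<omega>. matrix_inv (X (t (j - 1)) \<omega>) ** X (t j) \<omega>)"
  have step: "0 \<le> t (l - 1)" "t (l - 1) \<le> t l" if "l \<in> {1..k}" for l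
    using that grid_nonneg[of t k "l - 1"] t0 mono mono[rule_format, of "l - 1"] by auto
  have "g \<in> S (t j - t (j - 1))"
    using g supp_incr[OF step[OF j]] unfolding incr_def by simp
  then have g_inv: "conj_invariant (t i - t (i - 1)) g"
    by (rule inv[rotated 2]) (use step[OF i] step[OF j] in auto)
  have "distr M borel (\<lambda>\<omega>. g ** incr (t (i - 1)) (t i) \<omega> ** matrix_inv g)
      = distr M borel (\<lambda>\<omega>. g ** X (t i - t (i - 1)) \<omega> ** matrix_inv g)"
    using step[OF i] by (intro distr_comp_eq[OF _ _ _ distr_incr]) auto
  also have "\<dots> = distr M borel (incr (t (i - 1)) (t i))"
    using g_inv distr_incr[OF step[OF i]] unfolding conj_invariant_def by simp
  finally show "distr M borel (\<lambda>\<omega>. g ** (matrix_inv (X (t (i - 1)) \<omega>) ** X (t i) \<omega>) ** matrix_inv g)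
      = distr M borel (\<lambda>\<omega>. matrix_inv (X (t (i - 1)) \<omega>) ** X (t i) \<omega>)"
    unfolding incr_def .
qed

lemma conj_invariant_of_process_law_conj:
  assumes law: "\<forall>g\<in>H_X M X. process_law M (\<lambda>t \<omega>. matrix_inv g ** X t \<omega> ** g) = process_law M X"
    and s: "s \<ge> 0" and u: "u \<ge> 0" and g: "g \<in> S u"
  shows "conj_invariant s g"
proof -
  have gG: "g \<in> G" using g S_subset_G[OF u] by blast
  have "g \<in> (\<Union>t\<in>{0..}. S t)" using g u by auto
  then have inv_g: "matrix_inv g \<in> H_X M X"
    unfolding H_X_def by (rule closure_subset[THEN subsetD, OF gen_subgroup_matrix_inv,
      OF gen_subgroup_subset[THEN subsetD]])
  have "process_law M (\<lambda>t \<omega>. g ** X t \<omega> ** matrix_inv g) = process_law M X"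
    using law[rule_format, OF inv_g] matrix_inv_matrix_inv[OF G_invertible[OF gG]] by simp
  moreover have "distr (process_law M (\<lambda>t \<omega>. g ** X t \<omega> ** matrix_inv g)) borel (\<lambda>f. f s)
      = distr M borel (\<lambda>\<omega>. g ** X s \<omega> ** matrix_inv g)"
    by (rule distr_process_law_component[OF _ s]) measurable
  moreover have "distr (process_law M X) borel (\<lambda>f. f s) = distr M borel (X s)"
    by (rule distr_process_law_component[OF measurable_X s])
  ultimately show ?thesis
    unfolding conj_invariant_def by simp
qed

lemma process_law_conj_of_conj_invariant:
  assumes inv: "\<And>s u g. s \<ge> 0 \<Longrightarrow> u \<ge> 0 \<Longrightarrow> g \<in> S u \<Longrightarrow> conj_invariant s g"
    and g: "g \<in> H_X M X"
  shows "process_law M (\<lambda>t \<omega>. matrix_inv g ** X t \<omega> ** g) = process_law M X"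
proof (rule process_law_conj_eq)
  have g_inv: "invertible g" using g H_X_subset_G G_invertible by blast
  then show "g ** matrix_inv g = mat 1" by (rule matrix_inv_right)
  fix s :: real assume s: "s \<ge> 0"
  have "S t \<subseteq> law_centralizer s" if "t \<ge> 0" for t
    using inv[OF s that] S_subset_G[OF that] conj_invariant_iff_law_centralizer[OF s] by blast
  then have "H_X M X \<subseteq> law_centralizer s"
    by (rule H_X_subset_law_centralizer[OF s])
  with g have "matrix_inv g \<in> law_centralizer s"
    using law_centralizer_matrix_inv[OF s] by blast
  then have "conj_invariant s (matrix_inv g)"
    using conj_invariant_iff_law_centralizer[OF s] law_centralizer_def by blast
  then show "distr M borel (\<lambda>\<omega>. matrix_inv g ** X s \<omega> ** g) = distr M borel (X s)"
    unfolding conj_invariant_def using matrix_inv_matrix_inv[OF g_inv] by simp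
qed

definition conj_invariant_by_supports :: bool where
  "conj_invariant_by_supports \<longleftrightarrow> (\<forall>s\<ge>0. \<forall>u\<ge>0. \<forall>g\<in>S u. conj_invariant s g)"

lemma auto_inv_conj_increments_iff_conj_invariant_by_supports:
  "auto_inv_conj_increments M X \<longleftrightarrow> conj_invariant_by_supports"
  unfolding conj_invariant_by_supports_def
proof
  assume aic: "auto_inv_conj_increments M X"
  show "\<forall>s\<ge>0. \<forall>u\<ge>0. \<forall>g\<in>S u. conj_invariant s g"
    by (intro allI impI ballI conj_invariant_of_auto_inv_conj_increments[OF aic])
next
  assume by_supports: "\<forall>s\<ge>0. \<forall>u\<ge>0. \<forall>g\<in>S u. conj_invariant s g"
  show "auto_inv_conj_increments M X"
    by (intro auto_inv_conj_increments_of_conj_invariant) (rule by_supports[rule_format])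
qed

lemma self_conj_invariant_iff_conj_invariant_by_supports:
  "(\<forall>t\<ge>0. \<forall>g\<in>S t. conj_invariant t g) \<longleftrightarrow> conj_invariant_by_supports"
  unfolding conj_invariant_by_supports_def
proof
  assume self: "\<forall>t\<ge>0. \<forall>g\<in>S t. conj_invariant t g"
  show "\<forall>s\<ge>0. \<forall>u\<ge>0. \<forall>g\<in>S u. conj_invariant s g"
    by (intro allI impI ballI conj_invariant_of_self_conj_invariant[OF self[rule_format]])
qed simp

lemma process_law_conj_iff_conj_invariant_by_supports:
  "(\<forall>g\<in>H_X M X. process_law M (\<lambda>t \<omega>. matrix_inv g ** X t \<omega> ** g) = process_law M X)
     \<longleftrightarrow> conj_invariant_by_supports"
  unfolding conj_invariant_by_supports_def
proof
  assume law: "\<forall>g\<in>H_X M X. process_law M (\<lambda>t \<omega>. matrix_inv g ** X t \<omega> ** g) = process_law M X"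
  show "\<forall>s\<ge>0. \<forall>u\<ge>0. \<forall>g\<in>S u. conj_invariant s g"
    by (intro allI impI ballI conj_invariant_of_process_law_conj[OF law])
next
  assume by_supports: "\<forall>s\<ge>0. \<forall>u\<ge>0. \<forall>g\<in>S u. conj_invariant s g"
  show "\<forall>g\<in>H_X M X. process_law M (\<lambda>t \<omega>. matrix_inv g ** X t \<omega> ** g) = process_law M X"
    by (intro ballI process_law_conj_of_conj_invariant) (rule by_supports[rule_format])
qed

end

theorem proposition8p22:
  fixes M :: "'a measure" and G :: "('n::finite) mat set" and X :: "real \<Rightarrow> 'a \<Rightarrow> 'n mat"
  assumes "compact_matrix_group G"
    and "levy_process M G X"
  shows "(auto_inv_conj_increments M X
            \<longleftrightarrow> (\<forall>t\<ge>0. \<forall>g\<in>supp M (X t).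
                  distr M borel (\<lambda>\<omega>. g ** X t \<omega> ** matrix_inv g) = distr M borel (X t)))
       \<and> (auto_inv_conj_increments M X
            \<longleftrightarrow> (\<forall>g\<in>H_X M X.
                  process_law M (\<lambda>t \<omega>. matrix_inv g ** X t \<omega> ** g) = process_law M X))"
proof -
  interpret compact_levy M G X using assms by unfold_locales
  show ?thesis
    using auto_inv_conj_increments_iff_conj_invariant_by_supports
      self_conj_invariant_iff_conj_invariant_by_supports
      process_law_conj_iff_conj_invariant_by_supports
    unfolding conj_invariant_def by simp
qed

end
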